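(* Consider a general state space model as described in the context, with observations $y_1,y_2,\dots$ held fixed, and the i.i.d. Monte Carlo filter $f^N_{t|t}$. Assume that the state space is compact, that the transition densities do not depend on $t$, $a_t=a$ for all $t\ge 1$, and that there exist a probability density $h$ and constants $0<c_a\le C_a<\infty$ such that (i) $c_a h(x)\le a(x',x)\le C_a h(x)$ for all $x,x'$; (ii) $0<\int b_t(x,y_t)h(x)\,d\mu(x)<\infty$ for all $t$ and all $y_t$; (iii) $\Delta(x',x):=\sup_{x''}\frac{|a(x,x'')-a(x',x'')|}{h(x'')}\to0$ as $d(x,x')\to0$. Then for every $\varepsilon>0$ there are constants $c_1,c_2$ such that for all $t$ and all $N$, $$\mathbf P\big[\|f^N_{t|t}-f_{t|t}\|_1>\varepsilon\big]\le c_1\exp(-c_2N).$$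
   Context: State space model: the state space $E$ is a complete separable metric space (metric $d$) with Borel $\sigma$-field and a reference measure $\mu$; observation space with measure $\nu$. $(X_t)$ is a Markov chain with $X_0\sim a_0\,d\mu$ and $X_t\mid X_{t-1}=x'\sim a_t(x',x)\,d\mu(x)$; conditionally on $(X_t)$ the $Y_t$ are independent with $Y_t\mid X_t=x\sim b_t(x,y)\,d\nu(y)$. With observations fixed, $f_{t|t}$ is the conditional density of $X_t$ given $Y_{1:t}=y_{1:t}$: $f_{0|0}=a_0$, $f_{t|t}(x)\propto b_t(x,y_t)\int f_{t-1|t-1}(x')a_t(x',x)\,d\mu(x')$. Monte Carlo filter: $x_{1,0},\dots,x_{N,0}$ i.i.d. from $f^N_{0|0}=a_0$; given the particles up to time $t-1$, $x_{1,t},\dots,x_{N,t}$ are i.i.d. from $f^N_{t|t}(x)\propto b_t(x,y_t)\frac1N\sum_{j=1}^N a_t(x_{j,t-1},x)$. $\|\cdot\|_1$ is the $L_1(\mu)$ norm; probabilities refer only to the Monte Carlo randomness. *)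

theory Defs
  imports "HOL-Probability.Probability"
begin

definition normalize :: "'a measure \<Rightarrow> ('a \<Rightarrow> real) \<Rightarrow> 'a \<Rightarrow> real" where
  "normalize \<mu> g x = g x / enn2real (\<integral>\<^sup>+ z. ennreal (g z) \<partial>\<mu>)"

definition L1_dist :: "'a measure \<Rightarrow> ('a \<Rightarrow> real) \<Rightarrow> ('a \<Rightarrow> real) \<Rightarrow> ennreal" where
  "L1_dist \<mu> f g = (\<integral>\<^sup>+ x. ennreal \<bar>f x - g x\<bar> \<partial>\<mu>)"

fun filt :: "'a measure \<Rightarrow> ('a \<Rightarrow> real) \<Rightarrow> ('a \<Rightarrow> 'a \<Rightarrow> real) \<Rightarrow> (nat \<Rightarrow> 'a \<Rightarrow> 'b \<Rightarrow> real)
              \<Rightarrow> (nat \<Rightarrow> 'b) \<Rightarrow> nat \<Rightarrow> 'a \<Rightarrow> real" where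
  "filt \<mu> a0 a b y 0 = a0"
| "filt \<mu> a0 a b y (Suc t) =
     normalize \<mu> (\<lambda>x. b (Suc t) x (y (Suc t)) *
        enn2real (\<integral>\<^sup>+ x'. ennreal (filt \<mu> a0 a b y t x' * a x' x) \<partial>\<mu>))"

text \<open>Monte Carlo filter density f^N_{t|t}, as a function of the particle vector
  p = (x_{1,t-1},...,x_{N,t-1}) (indices 0..N-1). For t = 0 it is a0 and does not depend on p.\<close>
definition mc_dens :: "'a measure \<Rightarrow> ('a \<Rightarrow> real) \<Rightarrow> ('a \<Rightarrow> 'a \<Rightarrow> real) \<Rightarrow> (nat \<Rightarrow> 'a \<Rightarrow> 'b \<Rightarrow> real)
              \<Rightarrow> (nat \<Rightarrow> 'b) \<Rightarrow> nat \<Rightarrow> nat \<Rightarrow> (nat \<Rightarrow> 'a) \<Rightarrow> 'a \<Rightarrow> real" where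
  "mc_dens \<mu> a0 a b y N t p =
     (if t = 0 then a0
      else normalize \<mu> (\<lambda>x. b t x (y t) * ((1 / real N) * (\<Sum>j<N. a (p j) x))))"

text \<open>Law of the particle vector (x_{1,t},...,x_{N,t}) under the Monte Carlo randomness:
  i.i.d. from a0 at time 0; given the particles at time t, i.i.d. from f^N_{t+1|t+1}.\<close>
fun particles :: "'a measure \<Rightarrow> ('a \<Rightarrow> real) \<Rightarrow> ('a \<Rightarrow> 'a \<Rightarrow> real) \<Rightarrow> (nat \<Rightarrow> 'a \<Rightarrow> 'b \<Rightarrow> real)
              \<Rightarrow> (nat \<Rightarrow> 'b) \<Rightarrow> nat \<Rightarrow> nat \<Rightarrow> (nat \<Rightarrow> 'a) measure" where
  "particles \<mu> a0 a b y N 0 = (\<Pi>\<^sub>M j\<in>{..<N}. density \<mu> (\<lambda>x. ennreal (a0 x)))"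
| "particles \<mu> a0 a b y N (Suc t) =
     particles \<mu> a0 a b y N t \<bind>
       (\<lambda>p. \<Pi>\<^sub>M j\<in>{..<N}. density \<mu> (\<lambda>x. ennreal (mc_dens \<mu> a0 a b y N (Suc t) p x)))"

text \<open>Since f^N_{t|t} is a function of the particles at
  time t-1, the probability is taken under the law of those particles; for t = 0 the event is
  deterministic (f^N_{0|0} = a0) and the law used (that of the time-0 particles) is irrelevant.\<close>
definition mc_error_prob :: "'a measure \<Rightarrow> ('a \<Rightarrow> real) \<Rightarrow> ('a \<Rightarrow> 'a \<Rightarrow> real) \<Rightarrow> (nat \<Rightarrow> 'a \<Rightarrow> 'b \<Rightarrow> real)
              \<Rightarrow> (nat \<Rightarrow> 'b) \<Rightarrow> nat \<Rightarrow> nat \<Rightarrow> real \<Rightarrow> real" where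
  "mc_error_prob \<mu> a0 a b y N t \<epsilon> =
     measure (particles \<mu> a0 a b y N (t - 1))
       {p \<in> space (particles \<mu> a0 a b y N (t - 1)).
          L1_dist \<mu> (mc_dens \<mu> a0 a b y N t p) (filt \<mu> a0 a b y t) > ennreal \<epsilon>}"

end

theory Submission
  imports Defs
begin

(*
  The error is controlled through the ratio bound comparable F G L (the exponential of
  Hilbert's projective metric).  By (i), one exact filter step contracts L - 1 by the factor
  1 - c_a / C_a, while any two predictions are comparable with L = (C_a / c_a)^2.  By (iii) and
  compactness, a x' is, relative to h, uniformly close to a function of the cell of a finite
  partition containing x'.  Hence if the empirical cell frequencies of the N particles are
  within theta of the cell probabilities, the Monte Carlo filter deviates from the exact update
  of the sampling density by a factor of at most 1 + eta, and by Hoeffding's inequality this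
  fails with probability at most 2 K exp (- 2 N theta^2).  Iterating
  L |-> (1 + eta) (1 + (1 - c_a / C_a) (L - 1)) k times from (C_a / c_a)^2 yields L <= 1 + eps,
  and L - 1 bounds the L1 distance.  As the crude bound holds at every time, only the last k
  steps matter, which makes the bound uniform in t.
*)

section \<open>Measure-theoretic preliminaries\<close>

lemma emeasure_le_nn_integral_indicator:
  "emeasure M A \<le> (\<integral>\<^sup>+ x. indicator A x \<partial>M)"
  by (cases "A \<in> sets M") (simp_all add: emeasure_notin_sets)

lemma nn_integral_bind_le:
  assumes K: "K \<in> M \<rightarrow>\<^sub>M subprob_algebra B"
  shows "(\<integral>\<^sup>+ x. f x \<partial>(M \<bind> K)) \<le> (\<integral>\<^sup>+ z. \<integral>\<^sup>+ x. f x \<partial>K z \<partial>M)"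
proof (cases "space M = {}")
  case True
  then show ?thesis by (simp add: bind_empty nn_integral_empty)
next
  case False
  have sets_bind: "sets (M \<bind> K) = sets B"
    using False K by (auto intro!: sets_bind dest: sets_kernel)
  show ?thesis
    unfolding nn_integral_def[of "M \<bind> K" f]
  proof (rule SUP_least)
    fix g assume g: "g \<in> {g. simple_function (M \<bind> K) g \<and> g \<le> f}"
    then have "g \<in> borel_measurable B"
      using borel_measurable_simple_function measurable_cong_sets[OF sets_bind refl] by blast
    then have "integral\<^sup>S (M \<bind> K) g = (\<integral>\<^sup>+ z. \<integral>\<^sup>+ x. g x \<partial>K z \<partial>M)"
      using g K by (simp add: nn_integral_eq_simple_integral[symmetric] nn_integral_bind)
    also have "\<dots> \<le> (\<integral>\<^sup>+ z. \<integral>\<^sup>+ x. f x \<partial>K z \<partial>M)"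
      using g by (intro nn_integral_mono) (auto simp: le_fun_def)
    finally show "integral\<^sup>S (M \<bind> K) g \<le> (\<integral>\<^sup>+ z. \<integral>\<^sup>+ x. f x \<partial>K z \<partial>M)" .
  qed
qed

lemma nn_integral_add_const_le:
  fixes c :: ennreal
  assumes "c < \<infinity>"
  shows "(\<integral>\<^sup>+ x. c + f x \<partial>M) \<le> c * emeasure M (space M) + (\<integral>\<^sup>+ x. f x \<partial>M)"
  unfolding nn_integral_def[of M "\<lambda>x. c + f x"]
proof (rule SUP_least)
  fix g assume g: "g \<in> {g. simple_function M g \<and> g \<le> (\<lambda>x. c + f x)}"
  define g' where "g' x = g x - c" for x
  have sg: "simple_function M g" using g by simp
  then have "simple_function M g'"
    unfolding g'_def by (rule simple_function_compose1)
  moreover have "g x \<le> c + g' x" for x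
    unfolding g'_def using ennreal_minus_le_iff by blast
  moreover have "g' x \<le> f x" for x
    using g assms unfolding g'_def le_fun_def by (auto simp: ennreal_minus_le_iff)
  ultimately have "(\<integral>\<^sup>+ x. g x \<partial>M) \<le> (\<integral>\<^sup>+ x. c \<partial>M) + (\<integral>\<^sup>+ x. g' x \<partial>M)"
    by (subst nn_integral_add[symmetric])
       (auto intro!: nn_integral_mono dest: borel_measurable_simple_function)
  also have "\<dots> \<le> (\<integral>\<^sup>+ x. c \<partial>M) + (\<integral>\<^sup>+ x. f x \<partial>M)"
    using \<open>\<And>x. g' x \<le> f x\<close> by (intro add_left_mono nn_integral_mono) auto
  finally show "integral\<^sup>S M g \<le> c * emeasure M (space M) + (\<integral>\<^sup>+ x. f x \<partial>M)"
    using sg by (simp add: nn_integral_eq_simple_integral)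
qed

lemma indep_vars_PiM_components:
  assumes D: "prob_space D" and I: "I \<noteq> {}"
  shows "prob_space.indep_vars (\<Pi>\<^sub>M i\<in>I. D) (\<lambda>_. D) (\<lambda>i \<omega>. \<omega> i) I"
proof -
  interpret P: prob_space "\<Pi>\<^sub>M i\<in>I. D" using D by (intro prob_space_PiM)
  have "distr (\<Pi>\<^sub>M i\<in>I. D) (\<Pi>\<^sub>M i\<in>I. D) (\<lambda>\<omega>. \<lambda>i\<in>I. \<omega> i)
          = distr (\<Pi>\<^sub>M i\<in>I. D) (\<Pi>\<^sub>M i\<in>I. D) (\<lambda>\<omega>. \<omega>)"
    by (rule distr_cong) (auto simp: space_PiM PiE_def extensional_restrict)
  also have "\<dots> = (\<Pi>\<^sub>M i\<in>I. D)" by (rule distr_id)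
  also have "\<dots> = (\<Pi>\<^sub>M i\<in>I. distr (\<Pi>\<^sub>M i\<in>I. D) D (\<lambda>\<omega>. \<omega> i))"
    using D by (intro PiM_cong refl) (rule distr_PiM_component[symmetric]; auto)
  finally show ?thesis
    using I by (subst P.indep_vars_iff_distr_eq_PiM') auto
qed

lemma hoeffding_empirical_frequency:
  assumes D: "prob_space D" and N: "1 \<le> N" and B: "B \<in> sets D" and \<theta>: "0 \<le> \<theta>"
  shows "emeasure (\<Pi>\<^sub>M j\<in>{..<N}. D)
           {\<omega> \<in> space (\<Pi>\<^sub>M j\<in>{..<N}. D).
              \<theta> \<le> \<bar>(1 / real N) * (\<Sum>j<N. indicator B (\<omega> j)) - measure D B\<bar>}
         \<le> ennreal (2 * exp (- 2 * real N * \<theta>\<^sup>2))"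
proof -
  let ?P = "\<Pi>\<^sub>M j\<in>{..<N}. D"
  interpret P: prob_space ?P using D by (intro prob_space_PiM)
  have indep: "P.indep_vars (\<lambda>_. borel) (\<lambda>j \<omega>. indicator B (\<omega> j) :: real) {..<N}"
    using N B by (intro P.indep_vars_compose2[OF indep_vars_PiM_components[OF D]])
      (auto simp: lessThan_empty_iff)
  have expectation: "P.expectation (\<lambda>\<omega>. indicator B (\<omega> j) :: real) = measure D B" if "j < N" for j
  proof -
    have "P.expectation (\<lambda>\<omega>. indicator B (\<omega> j) :: real)
            = integral\<^sup>L (distr ?P D (\<lambda>\<omega>. \<omega> j)) (indicator B)"
      using that B by (intro integral_distr[symmetric]) auto
    also have "distr ?P D (\<lambda>\<omega>. \<omega> j) = D" using D that by (intro distr_PiM_component) auto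
    finally show ?thesis using B by simp
  qed
  interpret H: Hoeffding_ineq ?P "{..<N}" "\<lambda>j \<omega>. indicator B (\<omega> j)" "\<lambda>_. 0" "\<lambda>_. 1"
    "\<Sum>j<N. P.expectation (\<lambda>\<omega>. indicator B (\<omega> j))"
    by unfold_locales (auto simp: indep)
  have mean: "(\<Sum>j<N. P.expectation (\<lambda>\<omega>. indicator B (\<omega> j) :: real)) = real N * measure D B"
    using expectation by simp
  have "P.prob {\<omega> \<in> space ?P. real N * \<theta> \<le> \<bar>(\<Sum>j<N. indicator B (\<omega> j)) - real N * measure D B\<bar>}
          \<le> 2 * exp (- 2 * (real N * \<theta>)\<^sup>2 / (\<Sum>j<N. (1 - 0)\<^sup>2))"
    using H.Hoeffding_ineq_abs_ge[of "real N * \<theta>"] \<theta> N unfolding mean by simp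
  also have "\<dots> = 2 * exp (- 2 * real N * \<theta>\<^sup>2)"
    using N by (simp add: power2_eq_square)
  also have "{\<omega> \<in> space ?P. real N * \<theta> \<le> \<bar>(\<Sum>j<N. indicator B (\<omega> j)) - real N * measure D B\<bar>}
      = {\<omega> \<in> space ?P. \<theta> \<le> \<bar>(1 / real N) * (\<Sum>j<N. indicator B (\<omega> j)) - measure D B\<bar>}"
  proof -
    have "\<bar>(1 / real N) * S - m\<bar> = \<bar>S - real N * m\<bar> / real N" for S m :: real
      using N by (simp add: field_simps)
    then show ?thesis using N by (simp add: pos_le_divide_eq mult.commute)
  qed
  finally show ?thesis by (simp add: P.emeasure_eq_measure ennreal_leI)
qed

lemma compact_small_borel_partition:
  fixes \<delta> :: real
  assumes "compact (UNIV :: 'a set)" and "0 < \<delta>"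
  obtains B :: "nat \<Rightarrow> 'a::metric_space set" and K :: nat and z :: "nat \<Rightarrow> 'a"
  where "\<And>k. B k \<in> sets borel" "\<And>x. (\<Sum>k<K. indicator (B k) x :: real) = 1"
    "\<And>k x. k < K \<Longrightarrow> x \<in> B k \<Longrightarrow> dist x (z k) < \<delta>"
proof -
  obtain T :: "'a set" where "finite T" and T: "UNIV \<subseteq> (\<Union>c\<in>T. ball c \<delta>)"
    using assms unfolding compact_eq_totally_bounded by blast
  then obtain zs where zs: "set zs = T" using finite_list by blast
  define z where "z k = zs ! k" for k
  define B where "B k = ball (z k) \<delta> - (\<Union>i<k. ball (z i) \<delta>)" for k
  show ?thesis
  proof (rule that[of B "length zs" z])
    show "B k \<in> sets borel" for k unfolding B_def by (intro sets.Diff sets.finite_UN) auto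
  next
    fix x
    have "\<exists>k. k < length zs \<and> x \<in> ball (z k) \<delta>"
      using T zs unfolding z_def by (force simp: in_set_conv_nth)
    define k0 where "k0 = (LEAST k. k < length zs \<and> x \<in> ball (z k) \<delta>)"
    have k0: "k0 < length zs" "x \<in> ball (z k0) \<delta>"
      using LeastI_ex[OF \<open>\<exists>k. _\<close>] unfolding k0_def by auto
    have "x \<in> B k \<longleftrightarrow> k = k0" if "k < length zs" for k
      using that k0 not_less_Least[of _ "\<lambda>k. k < length zs \<and> x \<in> ball (z k) \<delta>"]
      unfolding B_def k0_def[symmetric] by (auto, metis lessThan_iff linorder_neqE_nat)
    then have "(\<Sum>k<length zs. indicator (B k) x :: real) = (\<Sum>k<length zs. if k = k0 then 1 else 0)"
      by (intro sum.cong) auto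
    then show "(\<Sum>k<length zs. indicator (B k) x :: real) = 1" using k0(1) by simp
  next
    show "dist x (z k) < \<delta>" if "x \<in> B k" for k x
      using that unfolding B_def by (simp add: dist_commute)
  qed
qed

section \<open>Ratio bounds\<close>

definition comparable :: "('a \<Rightarrow> real) \<Rightarrow> ('a \<Rightarrow> real) \<Rightarrow> real \<Rightarrow> bool" where
  "comparable F G L \<longleftrightarrow> (\<exists>m>0. \<forall>x. m * G x \<le> F x \<and> F x \<le> L * m * G x)"

lemma comparable_refl:
  assumes "\<And>x. 0 \<le> F x" "1 \<le> L"
  shows "comparable F F L"
proof -
  have "1 * F x \<le> L * 1 * F x" for x using assms by (intro mult_right_mono) auto
  then show ?thesis unfolding comparable_def by (intro exI[of _ 1]) auto
qed

lemma comparable_trans: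
  assumes "comparable F G L1" "comparable G H L2" "\<And>x. 0 \<le> H x" "0 \<le> L1"
  shows "comparable F H (L1 * L2)"
proof -
  obtain m1 where m1: "m1 > 0" "\<And>x. m1 * G x \<le> F x \<and> F x \<le> L1 * m1 * G x"
    using assms(1) unfolding comparable_def by blast
  obtain m2 where m2: "m2 > 0" "\<And>x. m2 * H x \<le> G x \<and> G x \<le> L2 * m2 * H x"
    using assms(2) unfolding comparable_def by blast
  have "m1 * (m2 * H x) \<le> F x" for x
    using m1(1) m2(2)[of x] by (meson m1(2) mult_left_mono order_trans less_imp_le)
  moreover have "F x \<le> L1 * m1 * (L2 * m2 * H x)" for x
    using m1(1) m2(2)[of x] assms(4)
    by (meson m1(2) mult_left_mono order_trans less_imp_le mult_nonneg_nonneg)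
  ultimately show ?thesis
    unfolding comparable_def using m1 m2 by (auto intro!: exI[of _ "m1 * m2"] simp: mult_ac)
qed

lemma ratio_bound_ge_1:
  fixes m L :: real
  assumes "0 < m" "m \<le> 1" "1 \<le> L * m"
  shows "1 \<le> L"
proof -
  have "0 < L * m" using assms by linarith
  then have "0 < L" using assms by (simp add: zero_less_mult_iff)
  then have "L * m \<le> L" using assms by (simp add: mult_left_le)
  then show ?thesis using assms by linarith
qed

lemma abs_diff_le_ratio_bound:
  fixes f g m L :: real
  assumes m: "0 < m" "m \<le> 1" "1 \<le> L * m" and g: "0 \<le> g" and f: "m * g \<le> f" "f \<le> L * m * g"
  shows "\<bar>f - g\<bar> \<le> (L - 1) * g"
proof -
  have L: "1 \<le> L" by (rule ratio_bound_ge_1[OF m])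
  then have "L * m \<le> L" "(L - 1) * m \<le> L - 1" using m by (simp_all add: mult_left_le)
  then have "1 - m \<le> L - 1" "L * m - 1 \<le> L - 1" using m by (simp_all add: left_diff_distrib)
  then have "(1 - m) * g \<le> (L - 1) * g" "(L * m - 1) * g \<le> (L - 1) * g"
    using g by (simp_all add: mult_right_mono)
  then show ?thesis using f by (simp add: abs_le_iff left_diff_distrib)
qed

lemma ratio_contraction_ineq:
  fixes r m L :: real
  assumes "0 < r" "r \<le> 1" "0 < m" "m \<le> 1" "1 \<le> L"
  shows "L * m - r * (L * m - 1) \<le> (1 + (1 - r) * (L - 1)) * (m + r * (1 - m))"
proof -
  have "(1 - r) * (L - 1) * m \<le> (1 - r) * (L - 1) * (m + r * (1 - m))"
    using assms by (intro mult_left_mono) auto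
  then show ?thesis by (simp add: algebra_simps)
qed

text \<open>The ratio bound after one filter step: the exact update contracts \<open>L - 1\<close> by the factor
  \<open>1 - r\<close>, and the Monte Carlo approximation of the update costs a factor \<open>1 + \<eta>\<close>.\<close>
definition ratio_step :: "real \<Rightarrow> real \<Rightarrow> real \<Rightarrow> real" where
  "ratio_step r \<eta> L = (1 + \<eta>) * (1 + (1 - r) * (L - 1))"

lemma ratio_step_ge_1:
  assumes "r \<le> 1" "0 \<le> \<eta>" "1 \<le> L"
  shows "1 \<le> ratio_step r \<eta> L"
proof -
  have "1 * 1 \<le> (1 + \<eta>) * (1 + (1 - r) * (L - 1))"
    using assms by (intro mult_mono) auto
  then show ?thesis unfolding ratio_step_def by simp
qed

lemma ratio_step_iterate_ge_1:
  "r \<le> 1 \<Longrightarrow> 0 \<le> \<eta> \<Longrightarrow> 1 \<le> L \<Longrightarrow> 1 \<le> (ratio_step r \<eta> ^^ k) L"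
  by (induction k) (auto intro: ratio_step_ge_1)

lemma ratio_step_excess_le:
  assumes r: "0 < r" "r \<le> 1" and \<eta>: "\<eta> \<le> r / 2" and L: "1 \<le> L"
  shows "ratio_step r \<eta> L - 1 \<le> \<eta> + (1 - r / 2) * (L - 1)"
proof -
  have "(1 + \<eta>) * (1 - r) \<le> (1 + r / 2) * (1 - r)" using \<eta> r by (intro mult_right_mono) auto
  also have "\<dots> \<le> 1 - r / 2" using r by (simp add: algebra_simps)
  finally have "(1 + \<eta>) * (1 - r) * (L - 1) \<le> (1 - r / 2) * (L - 1)"
    using L by (intro mult_right_mono) auto
  then show ?thesis unfolding ratio_step_def by (simp add: algebra_simps)
qed

lemma ratio_step_iterate_excess_le:
  assumes r: "0 < r" "r \<le> 1" and \<eta>: "0 \<le> \<eta>" "\<eta> \<le> r / 2" and L: "1 \<le> L"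
  shows "(ratio_step r \<eta> ^^ k) L - 1 \<le> 2 * \<eta> / r + (1 - r / 2) ^ k * (L - 1)"
proof (induction k)
  case 0
  then show ?case using r \<eta> by simp
next
  case (Suc k)
  have "(ratio_step r \<eta> ^^ Suc k) L - 1 \<le> \<eta> + (1 - r / 2) * ((ratio_step r \<eta> ^^ k) L - 1)"
    using ratio_step_excess_le[OF r \<eta>(2) ratio_step_iterate_ge_1] r \<eta> L by simp
  also have "\<dots> \<le> \<eta> + (1 - r / 2) * (2 * \<eta> / r + (1 - r / 2) ^ k * (L - 1))"
    using Suc r by (intro add_left_mono mult_left_mono) auto
  also have "\<dots> = 2 * \<eta> / r + (1 - r / 2) ^ Suc k * (L - 1)"
    using r by (simp add: field_simps)
  finally show ?case .
qed

lemma exists_ratio_step_iterate_le: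
  assumes r: "0 < r" "r \<le> 1" and L: "1 \<le> L" and \<epsilon>: "0 < \<epsilon>"
  obtains \<eta> k where "0 < \<eta>" "\<eta> \<le> r / 2" "(ratio_step r \<eta> ^^ k) L - 1 \<le> \<epsilon>"
proof -
  define \<eta> where "\<eta> = min (r / 2) (\<epsilon> * r / 4)"
  have \<eta>: "0 < \<eta>" "\<eta> \<le> r / 2" "\<eta> \<le> \<epsilon> * r / 4"
    using r \<epsilon> by (simp_all add: \<eta>_def)
  then have "2 * \<eta> / r \<le> \<epsilon> / 2" using r by (simp add: divide_le_eq)
  obtain k where k: "(1 - r / 2) ^ k < \<epsilon> / (2 * L)"
    using real_arch_pow_inv[of "\<epsilon> / (2 * L)" "1 - r / 2"] r \<epsilon> L by auto
  have "(1 - r / 2) ^ k * (L - 1) \<le> \<epsilon> / (2 * L) * L"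
    using k r L \<epsilon> by (intro mult_mono) auto
  also have "\<dots> = \<epsilon> / 2" using L by simp
  finally have "(ratio_step r \<eta> ^^ k) L - 1 \<le> \<epsilon>"
    using ratio_step_iterate_excess_le[OF r _ \<eta>(2) L, of k] \<eta> \<open>2 * \<eta> / r \<le> \<epsilon> / 2\<close> by linarith
  with \<eta> that show ?thesis by blast
qed

section \<open>The exact filter\<close>

locale state_space_model =
  fixes \<mu> :: "'a::polish_space measure" and \<nu> :: "'b measure"
    and a0 h :: "'a \<Rightarrow> real" and a :: "'a \<Rightarrow> 'a \<Rightarrow> real"
    and b :: "nat \<Rightarrow> 'a \<Rightarrow> 'b \<Rightarrow> real" and y :: "nat \<Rightarrow> 'b"
    and c_a C_a :: real
  assumes sets_mu: "sets \<mu> = sets borel"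
    and sigma_finite_mu: "sigma_finite_measure \<mu>"
    and a0_meas: "a0 \<in> borel_measurable borel"
    and a0_nonneg: "\<And>x. 0 \<le> a0 x"
    and a0_prob: "(\<integral>\<^sup>+ x. ennreal (a0 x) \<partial>\<mu>) = 1"
    and a_meas: "(\<lambda>z. a (fst z) (snd z)) \<in> borel_measurable (borel \<Otimes>\<^sub>M borel)"
    and a_nonneg: "\<And>x' x. 0 \<le> a x' x"
    and b_meas: "\<And>t. (\<lambda>z. b t (fst z) (snd z)) \<in> borel_measurable (borel \<Otimes>\<^sub>M \<nu>)"
    and b_nonneg: "\<And>t x v. 0 \<le> b t x v"
    and y_in: "\<And>t. y t \<in> space \<nu>"
    and h_meas: "h \<in> borel_measurable borel"
    and h_nonneg: "\<And>x. 0 \<le> h x"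
    and ca_bounds: "0 < c_a" "c_a \<le> C_a"
    and cond_i: "\<And>x' x. c_a * h x \<le> a x' x \<and> a x' x \<le> C_a * h x"
    and cond_ii: "\<And>t v. t \<ge> 1 \<Longrightarrow> v \<in> space \<nu> \<Longrightarrow>
                    0 < (\<integral>\<^sup>+ x. ennreal (b t x v * h x) \<partial>\<mu>) \<and>
                    (\<integral>\<^sup>+ x. ennreal (b t x v * h x) \<partial>\<mu>) < \<infinity>"
begin

sublocale sigma_finite_measure \<mu>
  by (rule sigma_finite_mu)

declare sets_mu[measurable_cong] h_meas[measurable] a0_meas[measurable]

lemma measurable_a[measurable]: "(\<lambda>(x', x). a x' x) \<in> borel_measurable (borel \<Otimes>\<^sub>M borel)"
  using a_meas by (simp add: case_prod_beta')

lemma measurable_likelihood[measurable]: "(\<lambda>x. b s x (y s)) \<in> borel_measurable borel"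
proof -
  have "(\<lambda>(x, v). b s x v) \<in> borel_measurable (borel \<Otimes>\<^sub>M \<nu>)"
    using b_meas by (simp add: case_prod_beta')
  moreover have "(\<lambda>x. y s) \<in> borel \<rightarrow>\<^sub>M \<nu>" using y_in by simp
  ultimately show ?thesis by measurable
qed

lemma C_a_pos: "0 < C_a"
  using ca_bounds by linarith

lemma c_a_div_C_a: "0 < c_a / C_a" "c_a / C_a \<le> 1"
  using ca_bounds C_a_pos by auto

definition is_density :: "('a \<Rightarrow> real) \<Rightarrow> bool" where
  "is_density F \<longleftrightarrow>
     F \<in> borel_measurable borel \<and> (\<forall>x. 0 \<le> F x) \<and> (\<integral>\<^sup>+ x. ennreal (F x) \<partial>\<mu>) = 1"

lemma is_density_integral:
  assumes "is_density F"
  shows "integrable \<mu> F" "integral\<^sup>L \<mu> F = 1"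
proof -
  have [measurable]: "F \<in> borel_measurable borel" using assms unfolding is_density_def by simp
  have "integrable \<mu> F \<and> integral\<^sup>L \<mu> F = 1"
    using assms unfolding is_density_def
    by (subst nn_integral_eq_integrable[symmetric]) auto
  then show "integrable \<mu> F" "integral\<^sup>L \<mu> F = 1" by auto
qed

definition predict :: "('a \<Rightarrow> real) \<Rightarrow> 'a \<Rightarrow> real" where
  "predict G x = enn2real (\<integral>\<^sup>+ x'. ennreal (G x' * a x' x) \<partial>\<mu>)"

definition update :: "nat \<Rightarrow> ('a \<Rightarrow> real) \<Rightarrow> 'a \<Rightarrow> real" where
  "update s G = normalize \<mu> (\<lambda>x. b s x (y s) * predict G x)"

definition h_sandwiched :: "('a \<Rightarrow> real) \<Rightarrow> bool" where
  "h_sandwiched U \<longleftrightarrow>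
     U \<in> borel_measurable borel \<and> (\<forall>x. c_a * h x \<le> U x \<and> U x \<le> C_a * h x)"

lemma filt_Suc: "filt \<mu> a0 a b y (Suc t) = update (Suc t) (filt \<mu> a0 a b y t)"
  by (simp add: update_def predict_def)

lemma measurable_predict[measurable]:
  assumes [measurable]: "G \<in> borel_measurable borel"
  shows "predict G \<in> borel_measurable borel"
  unfolding predict_def by measurable

lemma kernel_integrable:
  assumes D: "integrable \<mu> D"
  shows "integrable \<mu> (\<lambda>x'. D x' * a x' x)"
proof (rule Bochner_Integration.integrable_bound)
  show "integrable \<mu> (\<lambda>x'. C_a * h x * \<bar>D x'\<bar>)" using D by auto
  have [measurable]: "D \<in> borel_measurable \<mu>" using D by auto
  show "(\<lambda>x'. D x' * a x' x) \<in> borel_measurable \<mu>" by measurable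
  have "\<bar>D x'\<bar> * a x' x \<le> \<bar>D x'\<bar> * (C_a * h x)" for x'
    using cond_i by (intro mult_left_mono) auto
  then show "AE x' in \<mu>. norm (D x' * a x' x) \<le> norm (C_a * h x * \<bar>D x'\<bar>)"
    using a_nonneg h_nonneg C_a_pos by (auto simp: abs_mult mult_ac)
qed

lemma kernel_integral_bounds:
  assumes D: "integrable \<mu> D" and D_nonneg: "\<And>x'. 0 \<le> D x'"
  shows "c_a * h x * integral\<^sup>L \<mu> D \<le> (\<integral>x'. D x' * a x' x \<partial>\<mu>)"
    and "(\<integral>x'. D x' * a x' x \<partial>\<mu>) \<le> C_a * h x * integral\<^sup>L \<mu> D"
proof -
  have "(\<integral>x'. c_a * h x * D x' \<partial>\<mu>) \<le> (\<integral>x'. D x' * a x' x \<partial>\<mu>)"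
    using D kernel_integrable[OF D] cond_i D_nonneg
    by (intro integral_mono) (auto simp: mult.commute intro: mult_left_mono)
  then show "c_a * h x * integral\<^sup>L \<mu> D \<le> (\<integral>x'. D x' * a x' x \<partial>\<mu>)" by simp
  have "(\<integral>x'. D x' * a x' x \<partial>\<mu>) \<le> (\<integral>x'. C_a * h x * D x' \<partial>\<mu>)"
    using D kernel_integrable[OF D] cond_i D_nonneg
    by (intro integral_mono) (auto simp: mult.commute intro: mult_left_mono)
  then show "(\<integral>x'. D x' * a x' x \<partial>\<mu>) \<le> C_a * h x * integral\<^sup>L \<mu> D" by simp
qed

lemma predict_eq_integral:
  assumes F: "is_density F"
  shows "predict F x = (\<integral>x'. F x' * a x' x \<partial>\<mu>)"
proof -
  have F_nonneg: "0 \<le> F x'" for x' using F unfolding is_density_def by simp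
  have "(\<integral>\<^sup>+ x'. ennreal (F x' * a x' x) \<partial>\<mu>) = ennreal (\<integral>x'. F x' * a x' x \<partial>\<mu>)"
    using kernel_integrable[OF is_density_integral(1)[OF F]] F_nonneg a_nonneg
    by (intro nn_integral_eq_integral) auto
  moreover have "0 \<le> (\<integral>x'. F x' * a x' x \<partial>\<mu>)"
    using F_nonneg a_nonneg by (intro integral_nonneg_AE) auto
  ultimately show ?thesis unfolding predict_def by simp
qed

lemma h_sandwiched_predict:
  assumes F: "is_density F"
  shows "h_sandwiched (predict F)"
proof -
  have [measurable]: "F \<in> borel_measurable borel" and "\<And>x. 0 \<le> F x"
    using F unfolding is_density_def by auto
  then show ?thesis
    using kernel_integral_bounds[OF is_density_integral(1)[OF F]] is_density_integral(2)[OF F]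
    unfolding h_sandwiched_def by (simp add: predict_eq_integral[OF F, symmetric])
qed

lemma h_sandwiched_nonneg: "h_sandwiched U \<Longrightarrow> 0 \<le> U x"
  unfolding h_sandwiched_def using ca_bounds h_nonneg[of x]
  by (meson mult_nonneg_nonneg order.strict_implies_order order_trans)

lemma h_sandwiched_comparable:
  assumes U: "h_sandwiched U" and V: "h_sandwiched V"
  shows "comparable U V ((C_a / c_a)\<^sup>2)"
  unfolding comparable_def
proof (intro exI[of _ "c_a / C_a"] conjI allI)
  fix x
  have U_bounds: "c_a * h x \<le> U x" "U x \<le> C_a * h x"
    and V_bounds: "c_a * h x \<le> V x" "V x \<le> C_a * h x"
    using U V unfolding h_sandwiched_def by auto
  have "c_a / C_a * V x \<le> c_a / C_a * (C_a * h x)"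
    using V_bounds c_a_div_C_a by (intro mult_left_mono) auto
  then show "c_a / C_a * V x \<le> U x" using U_bounds C_a_pos by simp
  have "U x \<le> (C_a / c_a) * (c_a * h x)" using U_bounds ca_bounds by simp
  also have "\<dots> \<le> (C_a / c_a) * V x" using V_bounds ca_bounds C_a_pos by (intro mult_left_mono) auto
  finally show "U x \<le> (C_a / c_a)\<^sup>2 * (c_a / C_a) * V x"
    using ca_bounds C_a_pos by (simp add: power2_eq_square)
qed (use c_a_div_C_a in simp)

lemma normalize_likelihood_eq:
  assumes s: "1 \<le> s" and U: "h_sandwiched U"
  obtains Z where "0 < Z" "(\<integral>\<^sup>+ x. ennreal (b s x (y s) * U x) \<partial>\<mu>) = ennreal Z"
    "normalize \<mu> (\<lambda>x. b s x (y s) * U x) = (\<lambda>x. b s x (y s) * U x / Z)"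
proof -
  let ?I = "\<integral>\<^sup>+ x. ennreal (b s x (y s) * h x) \<partial>\<mu>"
  let ?J = "\<integral>\<^sup>+ x. ennreal (b s x (y s) * U x) \<partial>\<mu>"
  have [measurable]: "U \<in> borel_measurable borel" using U unfolding h_sandwiched_def by simp
  have scaled: "(\<integral>\<^sup>+ x. ennreal (k * (b s x (y s) * h x)) \<partial>\<mu>) = ennreal k * ?I" if "0 \<le> k" for k
    using that b_nonneg h_nonneg by (simp add: ennreal_mult nn_integral_cmult)
  have "b s x (y s) * (c_a * h x) \<le> b s x (y s) * U x"
    "b s x (y s) * U x \<le> b s x (y s) * (C_a * h x)" for x
    using U b_nonneg unfolding h_sandwiched_def by (simp_all add: mult_left_mono)
  then have lower: "ennreal c_a * ?I \<le> ?J" and upper: "?J \<le> ennreal C_a * ?I"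
    unfolding scaled[OF less_imp_le[OF ca_bounds(1)], symmetric]
      scaled[OF less_imp_le[OF C_a_pos], symmetric]
    by (auto intro!: nn_integral_mono ennreal_leI simp: mult_ac)
  have "0 < ?I" "?I < \<infinity>" using cond_ii[OF s y_in] by auto
  then have "0 < ennreal c_a * ?I" "ennreal C_a * ?I < \<infinity>"
    using ca_bounds by (simp_all add: ennreal_zero_less_mult_iff ennreal_mult_less_top)
  then have "0 < ?J" "?J < \<infinity>"
    using lower upper by (auto intro: order_less_le_trans order_le_less_trans)
  then show ?thesis
    by (intro that[of "enn2real ?J"]) (auto simp: normalize_def enn2real_positive_iff less_top)
qed

lemma normalize_likelihood_density:
  assumes s: "1 \<le> s" and U: "h_sandwiched U"
  shows "is_density (normalize \<mu> (\<lambda>x. b s x (y s) * U x))"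
proof -
  obtain Z where Z: "0 < Z" "(\<integral>\<^sup>+ x. ennreal (b s x (y s) * U x) \<partial>\<mu>) = ennreal Z"
    and eq: "normalize \<mu> (\<lambda>x. b s x (y s) * U x) = (\<lambda>x. b s x (y s) * U x / Z)"
    using normalize_likelihood_eq[OF assms] .
  have [measurable]: "U \<in> borel_measurable borel" using U unfolding h_sandwiched_def by simp
  have nonneg: "0 \<le> b s x (y s) * U x" for x
    using b_nonneg h_sandwiched_nonneg[OF U] by simp
  have "(\<integral>\<^sup>+ x. ennreal (b s x (y s) * U x / Z) \<partial>\<mu>)
          = (\<integral>\<^sup>+ x. ennreal (b s x (y s) * U x) \<partial>\<mu>) * ennreal (1 / Z)"
    using Z(1) nonneg by (subst nn_integral_multc[symmetric]) (auto simp: ennreal_mult[symmetric])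
  also have "\<dots> = 1" using Z by (simp add: ennreal_mult[symmetric])
  finally show ?thesis
    unfolding is_density_def eq using Z(1) nonneg by auto
qed

lemma normalize_likelihood_comparable:
  assumes s: "1 \<le> s" and U: "h_sandwiched U" and V: "h_sandwiched V" and UV: "comparable U V L"
  shows "comparable (normalize \<mu> (\<lambda>x. b s x (y s) * U x)) (normalize \<mu> (\<lambda>x. b s x (y s) * V x)) L"
proof -
  obtain ZU where ZU: "0 < ZU" "normalize \<mu> (\<lambda>x. b s x (y s) * U x) = (\<lambda>x. b s x (y s) * U x / ZU)"
    using normalize_likelihood_eq[OF s U] by metis
  obtain ZV where ZV: "0 < ZV" "normalize \<mu> (\<lambda>x. b s x (y s) * V x) = (\<lambda>x. b s x (y s) * V x / ZV)"
    using normalize_likelihood_eq[OF s V] by metis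
  obtain m where m: "0 < m" "\<And>x. m * V x \<le> U x \<and> U x \<le> L * m * V x"
    using UV unfolding comparable_def by blast
  show ?thesis
    unfolding comparable_def ZU(2) ZV(2)
  proof (intro exI[of _ "m * ZV / ZU"] conjI allI)
    show "0 < m * ZV / ZU" using m(1) ZU(1) ZV(1) by simp
    fix x
    let ?\<beta> = "b s x (y s)"
    have "m * ZV / ZU * (?\<beta> * V x / ZV) = ?\<beta> * (m * V x) / ZU"
      using ZV(1) by (simp add: field_simps)
    also have "\<dots> \<le> ?\<beta> * U x / ZU"
      using m(2)[of x] b_nonneg ZU(1) by (intro divide_right_mono mult_left_mono) auto
    finally show "m * ZV / ZU * (?\<beta> * V x / ZV) \<le> ?\<beta> * U x / ZU" .
    have "?\<beta> * U x / ZU \<le> ?\<beta> * (L * m * V x) / ZU"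
      using m(2)[of x] b_nonneg ZU(1) by (intro divide_right_mono mult_left_mono) auto
    also have "\<dots> = L * (m * ZV / ZU) * (?\<beta> * V x / ZV)"
      using ZV(1) by (simp add: field_simps)
    finally show "?\<beta> * U x / ZU \<le> L * (m * ZV / ZU) * (?\<beta> * V x / ZV)" .
  qed
qed

lemma update_density: "1 \<le> s \<Longrightarrow> is_density G \<Longrightarrow> is_density (update s G)"
  unfolding update_def by (intro normalize_likelihood_density h_sandwiched_predict)

lemma filt_density: "is_density (filt \<mu> a0 a b y t)"
proof (induction t)
  case 0
  then show ?case using a0_nonneg a0_prob by (simp add: is_density_def)
next
  case (Suc t)
  then show ?case unfolding filt_Suc by (intro update_density) auto
qed

lemma comparable_mass_bounds:
  assumes F: "is_density F" and G: "is_density G"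
    and m: "0 < m" "\<And>x. m * G x \<le> F x \<and> F x \<le> L * m * G x"
  shows "m \<le> 1" "1 \<le> L * m"
proof -
  note IF = is_density_integral[OF F] and IG = is_density_integral[OF G]
  have "(\<integral>x. m * G x \<partial>\<mu>) \<le> (\<integral>x. F x \<partial>\<mu>)"
    using IF IG m by (intro integral_mono) auto
  then show "m \<le> 1" using IF IG by simp
  have "(\<integral>x. F x \<partial>\<mu>) \<le> (\<integral>x. L * m * G x \<partial>\<mu>)"
    using IF IG m by (intro integral_mono) auto
  then show "1 \<le> L * m" using IF IG by simp
qed

lemma L1_dist_le_comparable:
  assumes F: "is_density F" and G: "is_density G" and FG: "comparable F G L"
  shows "L1_dist \<mu> F G \<le> ennreal (L - 1)"
proof -
  obtain m where m: "0 < m" "\<And>x. m * G x \<le> F x \<and> F x \<le> L * m * G x"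
    using FG unfolding comparable_def by blast
  note mass = comparable_mass_bounds[OF F G m]
  have [measurable]: "G \<in> borel_measurable borel" and G_nonneg: "\<And>x. 0 \<le> G x"
    using G unfolding is_density_def by auto
  have "L1_dist \<mu> F G \<le> (\<integral>\<^sup>+ x. ennreal (L - 1) * ennreal (G x) \<partial>\<mu>)"
  proof (unfold L1_dist_def, intro nn_integral_mono)
    fix x
    have "\<bar>F x - G x\<bar> \<le> (L - 1) * G x"
      using abs_diff_le_ratio_bound[OF m(1) mass G_nonneg] m(2) by blast
    then show "ennreal \<bar>F x - G x\<bar> \<le> ennreal (L - 1) * ennreal (G x)"
      using ratio_bound_ge_1[OF m(1) mass] G_nonneg[of x]
      by (simp add: ennreal_mult[symmetric] ennreal_leI)
  qed
  also have "\<dots> = ennreal (L - 1)"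
    using G unfolding is_density_def by (simp add: nn_integral_cmult)
  finally show ?thesis .
qed

lemma predict_combination_lower:
  assumes F: "is_density F" and G: "is_density G" and nonneg: "\<And>x. 0 \<le> \<alpha> * F x - \<beta> * G x"
  shows "(\<alpha> - \<beta>) * (c_a * h x) \<le> \<alpha> * predict F x - \<beta> * predict G x"
proof -
  note IF = is_density_integral[OF F] and IG = is_density_integral[OF G]
  have D: "integrable \<mu> (\<lambda>x'. \<alpha> * F x' - \<beta> * G x')" using IF IG by auto
  have "(\<integral>x'. (\<alpha> * F x' - \<beta> * G x') * a x' x \<partial>\<mu>)
          = (\<integral>x'. \<alpha> * (F x' * a x' x) - \<beta> * (G x' * a x' x) \<partial>\<mu>)"
    by (simp add: algebra_simps)
  also have "\<dots> = \<alpha> * predict F x - \<beta> * predict G x"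
    using kernel_integrable[OF IF(1)] kernel_integrable[OF IG(1)]
    by (simp add: predict_eq_integral[OF F] predict_eq_integral[OF G])
  finally show ?thesis
    using kernel_integral_bounds(1)[OF D nonneg, of x] IF IG by (simp add: mult_ac)
qed

lemma predict_comparable:
  assumes F: "is_density F" and G: "is_density G" and FG: "comparable F G L"
  shows "comparable (predict F) (predict G) (1 + (1 - c_a / C_a) * (L - 1))"
proof -
  obtain m where m: "0 < m" "\<And>x. m * G x \<le> F x \<and> F x \<le> L * m * G x"
    using FG unfolding comparable_def by blast
  note mass = comparable_mass_bounds[OF F G m]
  define r where "r = c_a / C_a"
  have r: "0 < r" "r \<le> 1" using c_a_div_C_a unfolding r_def by auto
  show ?thesis unfolding comparable_def r_def[symmetric]
  proof (intro exI[of _ "m + r * (1 - m)"] conjI allI)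
    show "0 < m + r * (1 - m)" using m(1) mass r by (simp add: add_pos_nonneg)
    fix x
    have "r * predict G x \<le> r * (C_a * h x)"
      using h_sandwiched_predict[OF G] r unfolding h_sandwiched_def by (simp add: mult_left_mono)
    then have G_x: "0 \<le> predict G x" "r * predict G x \<le> c_a * h x"
      using h_sandwiched_nonneg[OF h_sandwiched_predict[OF G]] C_a_pos unfolding r_def by auto
    have "(1 - m) * (r * predict G x) \<le> (1 - m) * (c_a * h x)"
      "(L * m - 1) * (r * predict G x) \<le> (L * m - 1) * (c_a * h x)"
      using G_x mass by (simp_all add: mult_left_mono)
    moreover have "(1 - m) * (c_a * h x) \<le> 1 * predict F x - m * predict G x"
      using m(2) by (intro predict_combination_lower[OF F G]) simp
    moreover have "(L * m - 1) * (c_a * h x) \<le> L * m * predict G x - 1 * predict F x"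
      using m(2) by (intro predict_combination_lower[OF G F]) simp
    ultimately have "(m + r * (1 - m)) * predict G x \<le> predict F x"
      "predict F x \<le> (L * m - r * (L * m - 1)) * predict G x"
      by (simp_all add: algebra_simps)
    moreover have "(L * m - r * (L * m - 1)) * predict G x
                     \<le> (1 + (1 - r) * (L - 1)) * (m + r * (1 - m)) * predict G x"
      using ratio_contraction_ineq[OF r m(1) mass(1) ratio_bound_ge_1[OF m(1) mass]] G_x
      by (intro mult_right_mono)
    ultimately show "(m + r * (1 - m)) * predict G x \<le> predict F x"
      "predict F x \<le> (1 + (1 - r) * (L - 1)) * (m + r * (1 - m)) * predict G x"
      by simp_all
  qed
qed

lemma update_comparable:
  assumes "1 \<le> s" "is_density F" "is_density G" "comparable F G L"
  shows "comparable (update s F) (update s G) (1 + (1 - c_a / C_a) * (L - 1))"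
  unfolding update_def using assms
  by (intro normalize_likelihood_comparable h_sandwiched_predict predict_comparable)

section \<open>The Monte Carlo filter\<close>

definition mc_predict :: "nat \<Rightarrow> (nat \<Rightarrow> 'a) \<Rightarrow> 'a \<Rightarrow> real" where
  "mc_predict N p x = (1 / real N) * (\<Sum>j<N. a (p j) x)"

lemma mc_dens_Suc:
  "mc_dens \<mu> a0 a b y N (Suc s) p = normalize \<mu> (\<lambda>x. b (Suc s) x (y (Suc s)) * mc_predict N p x)"
  by (simp add: mc_dens_def mc_predict_def)

lemma h_sandwiched_mc_predict:
  assumes N: "1 \<le> N"
  shows "h_sandwiched (mc_predict N p)"
proof -
  have "real N * (c_a * h x) \<le> (\<Sum>j<N. a (p j) x)" "(\<Sum>j<N. a (p j) x) \<le> real N * (C_a * h x)" for x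
    using sum_mono[of "{..<N}" "\<lambda>j. c_a * h x" "\<lambda>j. a (p j) x"]
      sum_mono[of "{..<N}" "\<lambda>j. a (p j) x" "\<lambda>j. C_a * h x"] cond_i by auto
  then show ?thesis
    using N unfolding h_sandwiched_def mc_predict_def by (auto simp: field_simps)
qed

lemma mc_dens_density: "1 \<le> N \<Longrightarrow> is_density (mc_dens \<mu> a0 a b y N (Suc s) p)"
  unfolding mc_dens_Suc by (intro normalize_likelihood_density h_sandwiched_mc_predict) auto

lemma mc_dens_comparable_filt:
  "1 \<le> N \<Longrightarrow> comparable (mc_dens \<mu> a0 a b y N (Suc s) p) (filt \<mu> a0 a b y (Suc s)) ((C_a / c_a)\<^sup>2)"
  unfolding mc_dens_Suc filt_Suc update_def
  by (intro normalize_likelihood_comparable h_sandwiched_comparable h_sandwiched_mc_predict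
      h_sandwiched_predict filt_density) auto

abbreviation particle_space :: "nat \<Rightarrow> (nat \<Rightarrow> 'a) measure" where
  "particle_space N \<equiv> \<Pi>\<^sub>M j\<in>{..<N}. borel"

lemma measurable_mc_dens[measurable]:
  "(\<lambda>(p, x). mc_dens \<mu> a0 a b y N (Suc s) p x) \<in> borel_measurable (particle_space N \<Otimes>\<^sub>M borel)"
  unfolding mc_dens_Suc normalize_def mc_predict_def by measurable

definition resample :: "nat \<Rightarrow> nat \<Rightarrow> (nat \<Rightarrow> 'a) \<Rightarrow> (nat \<Rightarrow> 'a) measure" where
  "resample N s p = (\<Pi>\<^sub>M j\<in>{..<N}. density \<mu> (\<lambda>x. ennreal (mc_dens \<mu> a0 a b y N (Suc s) p x)))"

lemma prob_space_density:
  assumes F: "is_density F"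
  shows "prob_space (density \<mu> (\<lambda>x. ennreal (F x)))"
proof (rule prob_spaceI)
  have [measurable]: "F \<in> borel_measurable borel" using F unfolding is_density_def by simp
  have "emeasure (density \<mu> (\<lambda>x. ennreal (F x))) (space \<mu>) = (\<integral>\<^sup>+ x. ennreal (F x) \<partial>\<mu>)"
    by (subst emeasure_density) (auto intro!: nn_integral_cong)
  then show "emeasure (density \<mu> (\<lambda>x. ennreal (F x))) (space (density \<mu> (\<lambda>x. ennreal (F x)))) = 1"
    using F unfolding is_density_def by simp
qed

lemma sets_PiM_density: "sets (\<Pi>\<^sub>M j\<in>{..<N}. density \<mu> f) = sets (particle_space N)"
  by (intro sets_PiM_cong) (auto simp: sets_mu)

lemma prob_space_resample: "1 \<le> N \<Longrightarrow> prob_space (resample N s p)"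
  unfolding resample_def by (intro prob_space_PiM prob_space_density mc_dens_density)

lemma measurable_resample:
  assumes N: "1 \<le> N"
  shows "resample N s \<in> particle_space N \<rightarrow>\<^sub>M prob_algebra (particle_space N)"
proof (rule measurable_prob_algebra_generated[OF sets_PiM Int_stable_prod_algebra
      prod_algebra_sets_into_space])
  show "prob_space (resample N s p)" for p using N by (rule prob_space_resample)
  show "sets (resample N s p) = sets (particle_space N)" for p
    unfolding resample_def by (rule sets_PiM_density)
next
  fix A :: "(nat \<Rightarrow> 'a) set" assume "A \<in> prod_algebra {..<N} (\<lambda>_. borel)"
  then obtain E where A: "A = (\<Pi>\<^sub>E j\<in>{..<N}. E j)" and E[measurable]: "\<And>j. E j \<in> sets borel"
  proof (elim prod_algebraE_all)
    fix E assume "A = (\<Pi>\<^sub>E j\<in>{..<N}. E j)" and E: "E \<in> (\<Pi> j\<in>{..<N}. sets borel)"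
    moreover have "(if j < N then E j else UNIV) \<in> sets borel" for j
      using E by auto
    moreover have "Pi\<^sub>E {..<N} E = (\<Pi>\<^sub>E j\<in>{..<N}. if j < N then E j else UNIV)"
      by (rule PiE_cong) simp
    ultimately show thesis
      using that[of "\<lambda>j. if j < N then E j else UNIV"] by simp
  qed
  have eq: "emeasure (resample N s p) A
          = (\<Prod>j<N. \<integral>\<^sup>+ x. ennreal (mc_dens \<mu> a0 a b y N (Suc s) p x) * indicator (E j) x \<partial>\<mu>)"
    for p
  proof -
    interpret product_prob_space "\<lambda>_. density \<mu> (\<lambda>x. ennreal (mc_dens \<mu> a0 a b y N (Suc s) p x))"
      using N by (intro product_prob_spaceI prob_space_density mc_dens_density)
    have [measurable]: "mc_dens \<mu> a0 a b y N (Suc s) p \<in> borel_measurable borel"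
      using mc_dens_density[OF N] unfolding is_density_def by blast
    show ?thesis
      unfolding resample_def A using E
      by (subst emeasure_PiM) (auto intro!: prod.cong emeasure_density simp: sets_mu)
  qed
  show "(\<lambda>p. emeasure (resample N s p) A) \<in> borel_measurable (particle_space N)"
    unfolding eq by measurable
qed

lemma particles_Suc_resample:
  "particles \<mu> a0 a b y N (Suc s) = particles \<mu> a0 a b y N s \<bind> resample N s"
  by (simp add: resample_def[abs_def])

lemma particles_in_prob_algebra:
  assumes N: "1 \<le> N"
  shows "particles \<mu> a0 a b y N s \<in> space (prob_algebra (particle_space N))"
proof (induction s)
  case 0
  have "prob_space (\<Pi>\<^sub>M j\<in>{..<N}. density \<mu> (\<lambda>x. ennreal (a0 x)))"
    by (intro prob_space_PiM prob_space_density) (simp add: is_density_def a0_nonneg a0_prob)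
  then show ?case by (simp add: space_prob_algebra sets_PiM_density)
next
  case (Suc s)
  then show ?case
    unfolding particles_Suc_resample
    using prob_space_bind'[OF Suc measurable_resample[OF N]] sets_bind'[OF Suc measurable_resample[OF N]]
    by (simp add: space_prob_algebra)
qed

lemma prob_space_particles: "1 \<le> N \<Longrightarrow> prob_space (particles \<mu> a0 a b y N s)"
  using particles_in_prob_algebra by (simp add: space_prob_algebra)

lemma measurable_resample_subprob:
  assumes N: "1 \<le> N"
  shows "resample N s \<in> particles \<mu> a0 a b y N s \<rightarrow>\<^sub>M subprob_algebra (particle_space N)"
proof -
  have "sets (particles \<mu> a0 a b y N s) = sets (particle_space N)"
    using particles_in_prob_algebra[OF N] by (simp add: space_prob_algebra)
  then show ?thesis
    using measurable_prob_algebraD[OF measurable_resample[OF N]]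
    by (simp cong: measurable_cong_sets)
qed

end

section \<open>Accuracy of one resampling step\<close>

locale particle_approximation = state_space_model +
  fixes N K :: nat and B :: "nat \<Rightarrow> 'a set" and z :: "nat \<Rightarrow> 'a" and e \<theta> \<eta> :: real
  assumes N_ge_1: "1 \<le> N"
    and B_sets[measurable]: "\<And>k. B k \<in> sets borel"
    and B_partition: "\<And>x. (\<Sum>k<K. indicator (B k) x :: real) = 1"
    and B_kernel_approx: "\<And>k x' x. k < K \<Longrightarrow> x' \<in> B k \<Longrightarrow> \<bar>a x' x - a (z k) x\<bar> \<le> e * h x"
    and \<theta>_pos: "0 < \<theta>" and \<eta>_pos: "0 < \<eta>" and \<eta>_le: "\<eta> \<le> c_a / C_a / 2"
    and errors_small: "2 * e + real K * C_a * \<theta> \<le> c_a * \<eta> / 4"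
begin

definition cell_prob :: "('a \<Rightarrow> real) \<Rightarrow> nat \<Rightarrow> real" where
  "cell_prob F k = measure (density \<mu> (\<lambda>x. ennreal (F x))) (B k)"

definition cell_freq :: "(nat \<Rightarrow> 'a) \<Rightarrow> nat \<Rightarrow> real" where
  "cell_freq p k = (1 / real N) * (\<Sum>j<N. indicator (B k) (p j))"

definition frequencies_accurate :: "('a \<Rightarrow> real) \<Rightarrow> (nat \<Rightarrow> 'a) \<Rightarrow> bool" where
  "frequencies_accurate F p \<longleftrightarrow> (\<forall>k<K. \<bar>cell_freq p k - cell_prob F k\<bar> < \<theta>)"

definition cell_kernel :: "'a \<Rightarrow> 'a \<Rightarrow> real" where
  "cell_kernel x' x = (\<Sum>k<K. indicator (B k) x' * a (z k) x)"

lemma cell_prob_eq_integral: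
  assumes F: "is_density F"
  shows "cell_prob F k = (\<integral>x. F x * indicator (B k) x \<partial>\<mu>)"
proof -
  have [measurable]: "F \<in> borel_measurable borel" using F unfolding is_density_def by simp
  have "cell_prob F k = integral\<^sup>L (density \<mu> (\<lambda>x. ennreal (F x))) (indicator (B k))"
    unfolding cell_prob_def by (simp add: sets_mu)
  also have "\<dots> = (\<integral>x. F x * indicator (B k) x \<partial>\<mu>)"
    using F unfolding is_density_def by (subst integral_density) auto
  finally show ?thesis .
qed

lemma cell_kernel_approx: "\<bar>a x' x - cell_kernel x' x\<bar> \<le> e * h x"
proof -
  have "a x' x - cell_kernel x' x = (\<Sum>k<K. indicator (B k) x' * (a x' x - a (z k) x))"
    unfolding cell_kernel_def
    by (simp add: right_diff_distrib sum_subtractf sum_distrib_right[symmetric] B_partition)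
  also have "\<bar>\<dots>\<bar> \<le> (\<Sum>k<K. indicator (B k) x' * (e * h x))"
    using B_kernel_approx
    by (intro order_trans[OF sum_abs] sum_mono) (auto simp: indicator_def)
  also have "\<dots> = e * h x" by (simp add: sum_distrib_right[symmetric] B_partition)
  finally show ?thesis .
qed

lemma mc_predict_cell_approx:
  "\<bar>mc_predict N p x - (\<Sum>k<K. cell_freq p k * a (z k) x)\<bar> \<le> e * h x"
proof -
  have N: "0 < real N" using N_ge_1 by simp
  have "(\<Sum>k<K. cell_freq p k * a (z k) x)
          = (\<Sum>k<K. \<Sum>j<N. (1 / real N) * (indicator (B k) (p j) * a (z k) x))"
    unfolding cell_freq_def by (simp only: mult.assoc sum_distrib_right sum_distrib_left)
  also have "\<dots> = (1 / real N) * (\<Sum>j<N. cell_kernel (p j) x)"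
    unfolding cell_kernel_def by (subst sum.swap) (simp only: sum_distrib_left)
  finally have "(\<Sum>k<K. cell_freq p k * a (z k) x) = (1 / real N) * (\<Sum>j<N. cell_kernel (p j) x)" .
  then have "\<bar>mc_predict N p x - (\<Sum>k<K. cell_freq p k * a (z k) x)\<bar>
               = (1 / real N) * \<bar>\<Sum>j<N. a (p j) x - cell_kernel (p j) x\<bar>"
    unfolding mc_predict_def using N
    by (simp add: sum_subtractf diff_divide_distrib[symmetric])
  also have "\<dots> \<le> (1 / real N) * (\<Sum>j<N. e * h x)"
    using N cell_kernel_approx by (intro mult_left_mono order_trans[OF sum_abs] sum_mono) auto
  also have "\<dots> = e * h x" using N by simp
  finally show ?thesis .
qed

lemma predict_cell_approx:
  assumes F: "is_density F"
  shows "\<bar>predict F x - (\<Sum>k<K. cell_prob F k * a (z k) x)\<bar> \<le> e * h x"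
proof -
  note IF = is_density_integral[OF F]
  have F_nonneg: "0 \<le> F x'" for x' using F unfolding is_density_def by simp
  have integrable_cell: "integrable \<mu> (\<lambda>x'. F x' * indicator (B k) x')" for k
    using integrable_mult_indicator[OF _ IF(1), of "B k"] by (simp add: sets_mu mult.commute)
  then have "integrable \<mu> (\<lambda>x'. \<Sum>k<K. F x' * indicator (B k) x' * a (z k) x)"
    by (intro Bochner_Integration.integrable_sum integrable_mult_left)
  then have integrable_cell_kernel: "integrable \<mu> (\<lambda>x'. F x' * cell_kernel x' x)"
    unfolding cell_kernel_def by (simp only: sum_distrib_left mult.assoc)
  have "(\<integral>x'. F x' * cell_kernel x' x \<partial>\<mu>)
          = (\<Sum>k<K. (\<integral>x'. F x' * indicator (B k) x' * a (z k) x \<partial>\<mu>))"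
    unfolding cell_kernel_def sum_distrib_left mult.assoc[symmetric]
    using integrable_cell by (intro Bochner_Integration.integral_sum) auto
  then have "(\<Sum>k<K. cell_prob F k * a (z k) x) = (\<integral>x'. F x' * cell_kernel x' x \<partial>\<mu>)"
    by (simp add: cell_prob_eq_integral[OF F])
  then have "\<bar>predict F x - (\<Sum>k<K. cell_prob F k * a (z k) x)\<bar>
               = \<bar>\<integral>x'. F x' * (a x' x - cell_kernel x' x) \<partial>\<mu>\<bar>"
    using kernel_integrable[OF IF(1)] integrable_cell_kernel
    by (simp add: predict_eq_integral[OF F] right_diff_distrib)
  also have "\<dots> \<le> (\<integral>x'. e * h x * F x' \<partial>\<mu>)"
  proof (intro order_trans[OF integral_abs_bound] integral_mono)
    show "integrable \<mu> (\<lambda>x'. \<bar>F x' * (a x' x - cell_kernel x' x)\<bar>)"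
      using kernel_integrable[OF IF(1)] integrable_cell_kernel by (simp add: right_diff_distrib)
    show "\<bar>F x' * (a x' x - cell_kernel x' x)\<bar> \<le> e * h x * F x'" for x'
      using F_nonneg[of x'] cell_kernel_approx[of x' x]
      by (simp add: abs_mult mult.commute mult_left_mono)
  qed (use IF in simp)
  also have "\<dots> = e * h x" using IF by simp
  finally show ?thesis .
qed

lemma mc_predict_approx:
  assumes F: "is_density F" and accurate: "frequencies_accurate F p"
  shows "\<bar>mc_predict N p x - predict F x\<bar> \<le> (2 * e + real K * C_a * \<theta>) * h x"
proof -
  have "\<bar>(\<Sum>k<K. cell_freq p k * a (z k) x) - (\<Sum>k<K. cell_prob F k * a (z k) x)\<bar>
          \<le> (\<Sum>k<K. \<bar>cell_freq p k - cell_prob F k\<bar> * a (z k) x)"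
    unfolding sum_subtractf[symmetric] left_diff_distrib[symmetric]
    by (intro order_trans[OF sum_abs] sum_mono) (simp add: abs_mult a_nonneg)
  also have "\<dots> \<le> (\<Sum>k<K. \<theta> * (C_a * h x))"
    using accurate cond_i a_nonneg unfolding frequencies_accurate_def
    by (intro sum_mono mult_mono) auto
  finally show ?thesis
    using mc_predict_cell_approx[of p x] predict_cell_approx[OF F, of x]
    by (simp add: algebra_simps)
qed

lemma mc_predict_comparable_predict:
  assumes F: "is_density F" and accurate: "frequencies_accurate F p"
  shows "comparable (mc_predict N p) (predict F) (1 + \<eta>)"
  unfolding comparable_def
proof (intro exI[of _ "1 - \<eta> / 4"] conjI allI)
  have "c_a / C_a / 2 \<le> 1 / 2" using c_a_div_C_a by simp
  then have \<eta>_half: "\<eta> \<le> 1 / 2" using \<eta>_le by linarith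
  then show "0 < 1 - \<eta> / 4" by simp
  fix x
  have V: "c_a * h x \<le> predict F x"
    using h_sandwiched_predict[OF F] unfolding h_sandwiched_def by simp
  have "\<bar>mc_predict N p x - predict F x\<bar> \<le> (c_a * \<eta> / 4) * h x"
    using mc_predict_approx[OF F accurate, of x] errors_small h_nonneg[of x]
    by (meson mult_right_mono order_trans)
  also have "\<dots> \<le> \<eta> / 4 * predict F x"
    using V \<eta>_pos by (simp add: mult_left_mono mult.commute mult.left_commute)
  finally have close: "\<bar>mc_predict N p x - predict F x\<bar> \<le> \<eta> / 4 * predict F x" .
  have "(1 - \<eta> / 4) * predict F x = predict F x - \<eta> / 4 * predict F x"
    by (simp add: algebra_simps)
  then show "(1 - \<eta> / 4) * predict F x \<le> mc_predict N p x"
    using abs_le_D2[OF close] by linarith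
  have "(1 + \<eta> / 4) * predict F x = predict F x + \<eta> / 4 * predict F x"
    by (simp add: algebra_simps)
  then have mc_upper: "mc_predict N p x \<le> (1 + \<eta> / 4) * predict F x"
    using abs_le_D1[OF close] by linarith
  have "\<eta> * \<eta> \<le> 2 * \<eta>" using \<eta>_pos \<eta>_half by (intro mult_right_mono) auto
  then have "1 + \<eta> / 4 \<le> (1 + \<eta>) * (1 - \<eta> / 4)" by (simp add: field_simps)
  then have "(1 + \<eta> / 4) * predict F x \<le> (1 + \<eta>) * (1 - \<eta> / 4) * predict F x"
    using h_sandwiched_nonneg[OF h_sandwiched_predict[OF F]] by (rule mult_right_mono)
  then show "mc_predict N p x \<le> (1 + \<eta>) * (1 - \<eta> / 4) * predict F x"
    using mc_upper by linarith
qed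

lemma mc_dens_comparable_update:
  "is_density F \<Longrightarrow> frequencies_accurate F p \<Longrightarrow>
     comparable (mc_dens \<mu> a0 a b y N (Suc s) p) (update (Suc s) F) (1 + \<eta>)"
  unfolding mc_dens_Suc update_def
  by (intro normalize_likelihood_comparable h_sandwiched_mc_predict h_sandwiched_predict N_ge_1
      mc_predict_comparable_predict) auto

lemma mc_dens_comparable_filt_step:
  assumes F: "is_density F" and FG: "comparable F (filt \<mu> a0 a b y s) L"
    and accurate: "frequencies_accurate F p"
  shows "comparable (mc_dens \<mu> a0 a b y N (Suc s) p) (filt \<mu> a0 a b y (Suc s))
           (ratio_step (c_a / C_a) \<eta> L)"
proof -
  have "comparable (update (Suc s) F) (filt \<mu> a0 a b y (Suc s)) (1 + (1 - c_a / C_a) * (L - 1))"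
    unfolding filt_Suc using F filt_density FG by (intro update_comparable) auto
  then show ?thesis
    unfolding ratio_step_def
    using mc_dens_comparable_update[OF F accurate] filt_density[of "Suc s"] \<eta>_pos
    by (intro comparable_trans) (auto simp: is_density_def)
qed

section \<open>Probability of a large error\<close>

definition deviation_bound :: real where
  "deviation_bound = real K * (2 * exp (- 2 * real N * \<theta>\<^sup>2))"

lemma deviation_bound_nonneg: "0 \<le> deviation_bound"
  unfolding deviation_bound_def by simp

lemma prob_frequencies_inaccurate:
  assumes F: "is_density F"
  shows "emeasure (\<Pi>\<^sub>M j\<in>{..<N}. density \<mu> (\<lambda>x. ennreal (F x)))
           {p \<in> space (\<Pi>\<^sub>M j\<in>{..<N}. density \<mu> (\<lambda>x. ennreal (F x))). \<not> frequencies_accurate F p}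
         \<le> ennreal deviation_bound"
proof -
  let ?D = "density \<mu> (\<lambda>x. ennreal (F x))"
  let ?P = "\<Pi>\<^sub>M j\<in>{..<N}. ?D"
  let ?A = "\<lambda>k. {p \<in> space ?P. \<theta> \<le> \<bar>(1 / real N) * (\<Sum>j<N. indicator (B k) (p j)) - measure ?D (B k)\<bar>}"
  have [measurable]: "B k \<in> sets ?D" for k by (simp add: sets_mu)
  have "{p \<in> space ?P. \<not> frequencies_accurate F p} = (\<Union>k<K. ?A k)"
    unfolding frequencies_accurate_def cell_freq_def cell_prob_def by (auto simp: not_less)
  then have "emeasure ?P {p \<in> space ?P. \<not> frequencies_accurate F p} \<le> (\<Sum>k<K. emeasure ?P (?A k))"
    by (simp add: emeasure_subadditive_finite image_subset_iff)
  also have "\<dots> \<le> (\<Sum>k<K. ennreal (2 * exp (- 2 * real N * \<theta>\<^sup>2)))"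
    using prob_space_density[OF F] N_ge_1 \<theta>_pos
    by (intro sum_mono hoeffding_empirical_frequency) auto
  also have "\<dots> = ennreal deviation_bound"
    unfolding deviation_bound_def by (simp add: ennreal_of_nat_eq_real_of_nat ennreal_mult)
  finally show ?thesis .
qed

text \<open>Failure sets are not known to be measurable, so their probabilities are bounded through
  outer integrals \<open>\<integral>\<^sup>+ p. indicator A p\<close>.\<close>
definition mc_failure :: "nat \<Rightarrow> real \<Rightarrow> (nat \<Rightarrow> 'a) set" where
  "mc_failure s L = {p. \<not> comparable (mc_dens \<mu> a0 a b y N (Suc s) p) (filt \<mu> a0 a b y (Suc s)) L}"

lemma prob_mc_failure_step:
  assumes F: "is_density F" and FG: "comparable F (filt \<mu> a0 a b y s) L"
  shows "(\<integral>\<^sup>+ p. indicator (mc_failure s (ratio_step (c_a / C_a) \<eta> L)) p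
           \<partial>(\<Pi>\<^sub>M j\<in>{..<N}. density \<mu> (\<lambda>x. ennreal (F x))))
         \<le> ennreal deviation_bound"
proof -
  let ?P = "\<Pi>\<^sub>M j\<in>{..<N}. density \<mu> (\<lambda>x. ennreal (F x))"
  let ?S = "{p \<in> space ?P. \<not> frequencies_accurate F p}"
  have [measurable]: "B k \<in> sets (density \<mu> (\<lambda>x. ennreal (F x)))" for k by (simp add: sets_mu)
  have "?S \<in> sets ?P"
    unfolding frequencies_accurate_def cell_freq_def by measurable
  have "(\<integral>\<^sup>+ p. indicator (mc_failure s (ratio_step (c_a / C_a) \<eta> L)) p \<partial>?P)
          \<le> (\<integral>\<^sup>+ p. indicator ?S p \<partial>?P)"
    using mc_dens_comparable_filt_step[OF F FG]
    by (intro nn_integral_mono) (auto simp: mc_failure_def indicator_def)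
  also have "\<dots> \<le> ennreal deviation_bound"
    using \<open>?S \<in> sets ?P\<close> prob_frequencies_inaccurate[OF F] by simp
  finally show ?thesis .
qed

abbreviation comparability_bound :: "nat \<Rightarrow> real" where
  "comparability_bound k \<equiv> (ratio_step (c_a / C_a) \<eta> ^^ k) ((C_a / c_a)\<^sup>2)"

lemma comparability_bound_ge_1: "1 \<le> comparability_bound k"
  using c_a_div_C_a \<eta>_pos ca_bounds by (intro ratio_step_iterate_ge_1) (auto simp: one_le_power)

lemma resample_mc_failure_le:
  "(\<integral>\<^sup>+ p. indicator (mc_failure (Suc s) (ratio_step (c_a / C_a) \<eta> L)) p \<partial>resample N s q)
     \<le> ennreal deviation_bound + indicator (mc_failure s L) q"
proof (cases "q \<in> mc_failure s L")
  case True
  interpret prob_space "resample N s q" by (rule prob_space_resample[OF N_ge_1])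
  have "(\<integral>\<^sup>+ p. indicator (mc_failure (Suc s) (ratio_step (c_a / C_a) \<eta> L)) p \<partial>resample N s q)
          \<le> (\<integral>\<^sup>+ p. 1 \<partial>resample N s q)"
    by (intro nn_integral_mono) (simp add: indicator_def)
  then show ?thesis using True by (simp add: emeasure_space_1 add_increasing)
next
  case False
  then have "comparable (mc_dens \<mu> a0 a b y N (Suc s) q) (filt \<mu> a0 a b y (Suc s)) L"
    unfolding mc_failure_def by simp
  from prob_mc_failure_step[OF mc_dens_density[OF N_ge_1] this] show ?thesis
    unfolding resample_def by (simp add: add_increasing2)
qed

lemma particles_0_mc_failure_le:
  assumes "1 \<le> L"
  shows "(\<integral>\<^sup>+ p. indicator (mc_failure 0 (ratio_step (c_a / C_a) \<eta> L)) p \<partial>particles \<mu> a0 a b y N 0)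
           \<le> ennreal deviation_bound"
proof -
  have "comparable a0 (filt \<mu> a0 a b y 0) L"
    unfolding filt.simps(1) by (rule comparable_refl[OF a0_nonneg assms])
  then show ?thesis
    using prob_mc_failure_step[of a0 0] a0_nonneg a0_prob by (simp add: is_density_def)
qed

lemma particles_Suc_mc_failure_le:
  "(\<integral>\<^sup>+ p. indicator (mc_failure (Suc s) (ratio_step (c_a / C_a) \<eta> L)) p
      \<partial>particles \<mu> a0 a b y N (Suc s))
     \<le> ennreal deviation_bound + (\<integral>\<^sup>+ q. indicator (mc_failure s L) q \<partial>particles \<mu> a0 a b y N s)"
proof -
  let ?M = "particles \<mu> a0 a b y N s"
  interpret prob_space ?M by (rule prob_space_particles[OF N_ge_1])
  have "(\<integral>\<^sup>+ p. indicator (mc_failure (Suc s) (ratio_step (c_a / C_a) \<eta> L)) p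
           \<partial>particles \<mu> a0 a b y N (Suc s))
        \<le> (\<integral>\<^sup>+ q. \<integral>\<^sup>+ p. indicator (mc_failure (Suc s) (ratio_step (c_a / C_a) \<eta> L)) p
             \<partial>resample N s q \<partial>?M)"
    unfolding particles_Suc_resample
    by (rule nn_integral_bind_le[OF measurable_resample_subprob[OF N_ge_1]])
  also have "\<dots> \<le> (\<integral>\<^sup>+ q. ennreal deviation_bound + indicator (mc_failure s L) q \<partial>?M)"
    by (intro nn_integral_mono resample_mc_failure_le)
  also have "\<dots> \<le> ennreal deviation_bound * emeasure ?M (space ?M)
                   + (\<integral>\<^sup>+ q. indicator (mc_failure s L) q \<partial>?M)"
    by (rule nn_integral_add_const_le) simp
  finally show ?thesis by (simp add: emeasure_space_1)
qed

lemma particles_mc_failure_le: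
  "(\<integral>\<^sup>+ p. indicator (mc_failure s (comparability_bound k)) p \<partial>particles \<mu> a0 a b y N s)
     \<le> ennreal (real k * deviation_bound)"
proof (induction k arbitrary: s)
  case 0
  have "mc_failure s (comparability_bound 0) = {}"
    using mc_dens_comparable_filt[OF N_ge_1] by (simp add: mc_failure_def)
  then show ?case by simp
next
  case (Suc k)
  have "(\<integral>\<^sup>+ p. indicator (mc_failure s (comparability_bound (Suc k))) p \<partial>particles \<mu> a0 a b y N s)
          \<le> ennreal deviation_bound + ennreal (real k * deviation_bound)"
  proof (cases s)
    case 0
    show ?thesis
      unfolding 0 funpow.simps(2) o_apply
      by (rule order_trans[OF particles_0_mc_failure_le[OF comparability_bound_ge_1] add_increasing2])
        simp_all
  next
    case (Suc s')
    show ?thesis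
      unfolding Suc funpow.simps(2) o_apply
      by (rule order_trans[OF particles_Suc_mc_failure_le add_left_mono[OF Suc.IH]])
  qed
  also have "\<dots> = ennreal (deviation_bound + real k * deviation_bound)"
    using deviation_bound_nonneg by (intro ennreal_plus[symmetric]) auto
  also have "deviation_bound + real k * deviation_bound = real (Suc k) * deviation_bound"
    by (simp add: algebra_simps)
  finally show ?case .
qed

lemma mc_error_prob_le:
  assumes "comparability_bound k - 1 \<le> \<epsilon>"
  shows "mc_error_prob \<mu> a0 a b y N t \<epsilon> \<le> real k * deviation_bound"
proof (cases t)
  case 0
  then have "mc_error_prob \<mu> a0 a b y N t \<epsilon> = 0"
    unfolding mc_error_prob_def by (simp add: mc_dens_def L1_dist_def)
  then show ?thesis using deviation_bound_nonneg by simp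
next
  case (Suc s)
  let ?M = "particles \<mu> a0 a b y N s"
  let ?A = "{p \<in> space ?M. ennreal \<epsilon> < L1_dist \<mu> (mc_dens \<mu> a0 a b y N (Suc s) p) (filt \<mu> a0 a b y (Suc s))}"
  interpret prob_space ?M by (rule prob_space_particles[OF N_ge_1])
  have "L1_dist \<mu> (mc_dens \<mu> a0 a b y N (Suc s) p) (filt \<mu> a0 a b y (Suc s)) \<le> ennreal \<epsilon>"
    if "p \<notin> mc_failure s (comparability_bound k)" for p
    using L1_dist_le_comparable[OF mc_dens_density[OF N_ge_1] filt_density] that ennreal_leI[OF assms]
    unfolding mc_failure_def by (blast intro: order_trans)
  then have "?A \<subseteq> mc_failure s (comparability_bound k)"
    by (blast dest: leD)
  then have "emeasure ?M ?A \<le> (\<integral>\<^sup>+ p. indicator (mc_failure s (comparability_bound k)) p \<partial>?M)"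
    by (intro order_trans[OF emeasure_le_nn_integral_indicator] nn_integral_mono)
      (auto simp: indicator_def)
  also have "\<dots> \<le> ennreal (real k * deviation_bound)" by (rule particles_mc_failure_le)
  finally show ?thesis
    unfolding mc_error_prob_def using Suc deviation_bound_nonneg
    by (simp add: emeasure_eq_measure ennreal_le_iff)
qed

end

context state_space_model
begin

lemma abs_kernel_diff_le:
  assumes "\<bar>a x' x - a x'' x\<bar> / h x \<le> e"
  shows "\<bar>a x' x - a x'' x\<bar> \<le> e * h x"
proof (cases "h x = 0")
  case True
  \<comment> \<open>the hypothesis is void here (\<open>t / 0 = 0\<close>), but (i) forces both kernel values to be \<open>0\<close>\<close>
  then show ?thesis using cond_i[where x'=x' and x=x] cond_i[where x'=x'' and x=x] by simp
next
  case False
  then have "0 < h x" using h_nonneg[of x] by (simp add: order_less_le)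
  with assms show ?thesis by (simp add: divide_le_eq mult.commute)
qed

lemma exists_particle_approximation:
  assumes compact: "compact (UNIV :: 'a set)"
    and cond_iii: "\<forall>e>0. \<exists>\<delta>>0. \<forall>x x'. dist x x' < \<delta> \<longrightarrow>
                    (\<forall>x''. \<bar>a x x'' - a x' x''\<bar> / h x'' \<le> e)"
    and \<eta>: "0 < \<eta>" "\<eta> \<le> c_a / C_a / 2"
  obtains K B z e \<theta>
  where "0 < \<theta>" "\<And>N. 1 \<le> N \<Longrightarrow> particle_approximation \<mu> \<nu> a0 h a b y c_a C_a N K B z e \<theta> \<eta>"
proof -
  define e where "e = c_a * \<eta> / 16"
  have "0 < e" using ca_bounds \<eta> by (simp add: e_def)
  with cond_iii obtain \<delta> where "0 < \<delta>"
    and \<delta>: "\<forall>x x'. dist x x' < \<delta> \<longrightarrow> (\<forall>x''. \<bar>a x x'' - a x' x''\<bar> / h x'' \<le> e)"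
    by auto
  show ?thesis
  proof (rule compact_small_borel_partition[OF compact \<open>0 < \<delta>\<close>])
    fix B :: "nat \<Rightarrow> 'a set" and K and z :: "nat \<Rightarrow> 'a"
    assume B: "\<And>k. B k \<in> sets borel" "\<And>x. (\<Sum>k<K. indicator (B k) x :: real) = 1"
      and B_small: "\<And>k x. k < K \<Longrightarrow> x \<in> B k \<Longrightarrow> dist x (z k) < \<delta>"
    have approx: "\<bar>a x' x - a (z k) x\<bar> \<le> e * h x" if "k < K" "x' \<in> B k" for k x' x
      by (rule abs_kernel_diff_le[OF \<delta>[rule_format, OF B_small[OF that]]])
    define \<theta> where "\<theta> = c_a * \<eta> / 8 / ((real K + 1) * C_a)"
    have KC: "0 < (real K + 1) * C_a" using C_a_pos by simp
    then have "0 < \<theta>" using ca_bounds \<eta> by (simp add: \<theta>_def)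
    have "real K * C_a * \<theta> \<le> (real K + 1) * C_a * \<theta>"
      using C_a_pos \<open>0 < \<theta>\<close> by (intro mult_right_mono) auto
    also have "\<dots> = c_a * \<eta> / 8" using KC C_a_pos by (simp add: \<theta>_def)
    finally have "2 * e + real K * C_a * \<theta> \<le> c_a * \<eta> / 4" unfolding e_def by linarith
    with \<open>0 < \<theta>\<close> B approx \<eta> show thesis
      by (intro that[of \<theta> K B z e] particle_approximation.intro state_space_model_axioms
          particle_approximation_axioms.intro) auto
  qed
qed

end

theorem theorem3:
  fixes \<mu> :: "'a::polish_space measure" and \<nu> :: "'b measure"
    and a0 h :: "'a \<Rightarrow> real" and a :: "'a \<Rightarrow> 'a \<Rightarrow> real"
    and b :: "nat \<Rightarrow> 'a \<Rightarrow> 'b \<Rightarrow> real" and y :: "nat \<Rightarrow> 'b"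
    and c_a C_a :: real
  assumes compact_E: "compact (UNIV :: 'a set)"
    and sets_mu: "sets \<mu> = sets borel"
    and sigma_finite_mu: "sigma_finite_measure \<mu>"
    and a0_meas: "a0 \<in> borel_measurable borel"
    and a0_nonneg: "\<And>x. 0 \<le> a0 x"
    and a0_prob: "(\<integral>\<^sup>+ x. ennreal (a0 x) \<partial>\<mu>) = 1"
    and a_meas: "(\<lambda>z. a (fst z) (snd z)) \<in> borel_measurable (borel \<Otimes>\<^sub>M borel)"
    and a_nonneg: "\<And>x' x. 0 \<le> a x' x"
    and a_prob: "\<And>x'. (\<integral>\<^sup>+ x. ennreal (a x' x) \<partial>\<mu>) = 1"
    and b_meas: "\<And>t. (\<lambda>z. b t (fst z) (snd z)) \<in> borel_measurable (borel \<Otimes>\<^sub>M \<nu>)"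
    and b_nonneg: "\<And>t x v. 0 \<le> b t x v"
    and b_prob: "\<And>t x. t \<ge> 1 \<Longrightarrow> (\<integral>\<^sup>+ v. ennreal (b t x v) \<partial>\<nu>) = 1"
    and y_in: "\<And>t. y t \<in> space \<nu>"
    and h_meas: "h \<in> borel_measurable borel"
    and h_nonneg: "\<And>x. 0 \<le> h x"
    and h_prob: "(\<integral>\<^sup>+ x. ennreal (h x) \<partial>\<mu>) = 1"
    and ca_bounds: "0 < c_a" "c_a \<le> C_a"
    and cond_i: "\<And>x' x. c_a * h x \<le> a x' x \<and> a x' x \<le> C_a * h x"
    and cond_ii: "\<And>t v. t \<ge> 1 \<Longrightarrow> v \<in> space \<nu> \<Longrightarrow>
                    0 < (\<integral>\<^sup>+ x. ennreal (b t x v * h x) \<partial>\<mu>) \<and>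
                    (\<integral>\<^sup>+ x. ennreal (b t x v * h x) \<partial>\<mu>) < \<infinity>"
    and cond_iii: "\<forall>e>0. \<exists>\<delta>>0. \<forall>x x'. dist x x' < \<delta> \<longrightarrow>
                    (\<forall>x''. \<bar>a x x'' - a x' x''\<bar> / h x'' \<le> e)"
  shows "\<forall>\<epsilon>>0. \<exists>c1 c2::real. c2 > 0 \<and>
           (\<forall>t N. N \<ge> 1 \<longrightarrow> mc_error_prob \<mu> a0 a b y N t \<epsilon> \<le> c1 * exp (- c2 * real N))"
proof (intro allI impI)
  fix \<epsilon> :: real assume "0 < \<epsilon>"
  interpret state_space_model \<mu> \<nu> a0 h a b y c_a C_a
    by (rule state_space_model.intro) (fact assms)+
  have "1 \<le> (C_a / c_a)\<^sup>2" using ca_bounds by (simp add: one_le_power)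
  then obtain \<eta> k where \<eta>: "0 < \<eta>" "\<eta> \<le> c_a / C_a / 2"
    and k: "(ratio_step (c_a / C_a) \<eta> ^^ k) ((C_a / c_a)\<^sup>2) - 1 \<le> \<epsilon>"
    using exists_ratio_step_iterate_le[OF c_a_div_C_a _ \<open>0 < \<epsilon>\<close>] by auto
  obtain K B z e \<theta> where "0 < \<theta>"
    and approximation: "\<And>N. 1 \<le> N \<Longrightarrow> particle_approximation \<mu> \<nu> a0 h a b y c_a C_a N K B z e \<theta> \<eta>"
    using exists_particle_approximation[OF compact_E cond_iii \<eta>] by metis
  have "mc_error_prob \<mu> a0 a b y N t \<epsilon> \<le> real k * (2 * real K) * exp (- (2 * \<theta>\<^sup>2) * real N)"
    if "1 \<le> N" for N t
  proof -
    interpret particle_approximation \<mu> \<nu> a0 h a b y c_a C_a N K B z e \<theta> \<eta>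
      by (rule approximation[OF that])
    show ?thesis
      using mc_error_prob_le[OF k, of t] unfolding deviation_bound_def by (simp add: mult_ac)
  qed
  with \<open>0 < \<theta>\<close> show "\<exists>c1 c2::real. c2 > 0 \<and>
      (\<forall>t N. N \<ge> 1 \<longrightarrow> mc_error_prob \<mu> a0 a b y N t \<epsilon> \<le> c1 * exp (- c2 * real N))"
    by (intro exI[of _ "real k * (2 * real K)"] exI[of _ "2 * \<theta>\<^sup>2"]) auto
qed

end
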